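(* Let $A=(a,\ ha+d,\ ha+2d,\ ha+4d,\ \dots,\ ha+2kd)$ where $\gcd(a,d)=1$, $a,h,d,k\in\mathbb{P}$, $a>2$, $d>h$, $1\le 2k\le a-1$. Write $a-1=2ks+t$ with $1\le t\le 2k$. Then \begin{align*} \sum_{r=0}^{a-1}x^{N_r}&=1+\frac{x^{ha+d}\big(1-x^{(ha+2kd)(s+1)}\big)}{1-x^{ha+2kd}}+\frac{x^{ha+2d}\big(1-x^{(ha+2kd)s}\big)\big(1-x^{2dk}\big)}{(1-x^{ha+2kd})(1-x^{2d})}\\ &\quad+\frac{x^{2ha+3d}\big(1-x^{(ha+2kd)s}\big)\big(1-x^{2d(k-1)}\big)}{(1-x^{ha+2kd})(1-x^{2d})}+f_1(x), \end{align*} where $$f_1(x)=\begin{cases}\dfrac{x^{ha(s+1)+d(2ks+2)}\big(1-x^{d(t-1)}\big)}{1-x^{2d}}+\dfrac{x^{ha(s+2)+d(2ks+3)}\big(1-x^{d(t-1)}\big)}{1-x^{2d}} & \text{if } t \text{ is odd},\\[8pt] \dfrac{x^{ha(s+1)+d(2ks+2)}\big(1-x^{dt}\big)}{1-x^{2d}}+\dfrac{x^{ha(s+2)+d(2ks+3)}\big(1-x^{d(t-2)}\big)}{1-x^{2d}} & \text{if } t \text{ is even}.\end{cases}$$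
   Context: For $A=(a,c_1,\dots,c_m)$ of positive integers with $\gcd(A)=1$ and $0\le r\le a-1$, $N_r$ is the least nonnegative integer $a_0\equiv r\pmod a$ that can be written as $\sum_{i=1}^m c_ix_i$ with all $x_i$ nonnegative integers. $\mathbb{P}=\{1,2,\dots\}$. *)

theory Defs
  imports Complex_Main
begin

definition representable :: "nat list \<Rightarrow> nat \<Rightarrow> bool" where
  "representable cs n \<longleftrightarrow>
     (\<exists>xs. length xs = length cs \<and> n = (\<Sum>i<length cs. cs ! i * xs ! i))"

definition N :: "nat \<Rightarrow> nat list \<Rightarrow> nat \<Rightarrow> nat" where
  "N a cs r = (LEAST n. n mod a = r \<and> representable cs n)"

text \<open>The generators ha+d, ha+2d, ha+4d, ..., ha+2kd (the tuple A without a).\<close>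
definition gens :: "nat \<Rightarrow> nat \<Rightarrow> nat \<Rightarrow> nat \<Rightarrow> nat list" where
  "gens a h d k = (h*a + d) # map (\<lambda>j. h*a + 2*j*d) [1..<k+1]"

end

theory Submission
  imports Defs "HOL-Number_Theory.Cong"
begin

(* A representable number is M*(h*a) + C*d, where M is the number of generators used and C is
   a sum of M parts from {1, 2, 4, ..., 2k}.  As gcd(a, d) = 1, the residues c*d mod a with c < a
   exhaust the classes mod a, and the least representable element of the class of c*d is
   m(c)*(h*a) + c*d, where m(c) is the least number of such parts summing to c: any other
   representation has C >= c + a, and the surplus a*d > h*a pays for the at most one extra part
   that c may need.  Since m(c + 2k) = m(c) + 1, the generating function splits into s full blocks
   of length 2k and a tail of length t, each summed as a geometric series. *)

lemma representable_0: "representable cs 0"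
  unfolding representable_def by (rule exI[of _ "replicate (length cs) 0"]) simp

lemma representable_add_nth:
  assumes "representable cs n" and "i < length cs"
  shows "representable cs (n + cs ! i)"
proof -
  obtain xs where xs: "length xs = length cs" "n = (\<Sum>j<length cs. cs ! j * xs ! j)"
    using assms(1) unfolding representable_def by blast
  let ?ys = "xs[i := Suc (xs ! i)]"
  have "(\<Sum>j<length cs. cs ! j * ?ys ! j)
      = (\<Sum>j<length cs. cs ! j * xs ! j + (if j = i then cs ! i else 0))"
    by (rule sum.cong) (auto simp: xs(1) nth_list_update)
  also have "\<dots> = n + cs ! i"
    using assms(2) by (simp add: sum.distrib xs(2))
  finally show ?thesis
    unfolding representable_def using xs(1) by (intro exI[of _ ?ys]) simp
qed

lemma length_gens: "length (gens a h d k) = Suc k"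
  by (simp add: gens_def)

lemma nth_gens_0: "gens a h d k ! 0 = h*a + d"
  by (simp add: gens_def)

lemma nth_gens_Suc: "j < k \<Longrightarrow> gens a h d k ! Suc j = h*a + 2*Suc j*d"
  by (simp add: gens_def del: upt_Suc)

lemma nth_gens_last: "0 < k \<Longrightarrow> gens a h d k ! k = h*a + 2*k*d"
  using nth_gens_Suc[of "k - 1" k] by simp

text \<open>The least number of parts from \<open>{1, 2, 4, ..., 2*k}\<close> with sum \<open>c\<close>.\<close>
definition min_summands :: "nat \<Rightarrow> nat \<Rightarrow> nat" where
  "min_summands k c =
     (if even c then (c + 2*k - 1) div (2*k) else Suc ((c + 2*k - 2) div (2*k)))"

lemma min_summands_0: "min_summands k 0 = 0"
  by (cases "k = 0") (simp_all add: min_summands_def)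

lemma min_summands_add_double:
  assumes "0 < k"
  shows "min_summands k (c + 2*k) = Suc (min_summands k c)"
proof -
  have "(c + 2*k + 2*k - j) div (2*k) = Suc ((c + 2*k - j) div (2*k))" if "j \<le> 2" for j
  proof -
    have shift: "c + 2*k + 2*k - j = (c + 2*k - j) + 2*k"
      using that assms by simp
    show ?thesis
      using assms by (simp only: shift) simp
  qed
  from this[of 1] this[of 2] show ?thesis
    by (simp add: min_summands_def)
qed

lemma min_summands_odd:
  assumes "0 < k" and "odd c"
  shows "min_summands k c = Suc (min_summands k (c - 1))"
proof -
  have "c + 2*k - 2 = (c - 1) + 2*k - 1" "even (c - 1)"
    using assms by (auto elim: oddE)
  with \<open>odd c\<close> show ?thesis
    by (simp only: min_summands_def if_True if_False)
qed

lemma min_summands_even_le: "even c \<Longrightarrow> 0 < c \<Longrightarrow> c \<le> 2*k \<Longrightarrow> min_summands k c = 1"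
  unfolding min_summands_def by (simp add: div_nat_eqI)

lemma min_summands_odd_le: "odd c \<Longrightarrow> 1 < c \<Longrightarrow> c \<le> 2*k \<Longrightarrow> min_summands k c = 2"
  using min_summands_odd[of k c] min_summands_even_le[of "c - 1" k] by simp

lemma min_summands_le:
  assumes "0 < k" and "C \<le> 2*k*M" and "odd C \<Longrightarrow> C + 2*k \<le> 2*k*M + 1"
  shows "min_summands k C \<le> M"
proof (cases "even C")
  case True
  have "C + 2*k - 1 < (M + 1) * (2*k)"
    using assms(1,2) by (simp add: algebra_simps)
  then have "(C + 2*k - 1) div (2*k) < M + 1"
    by (rule less_mult_imp_div_less)
  then show ?thesis
    using True by (simp add: min_summands_def)
next
  case False
  have "C + 2*k - 2 < M * (2*k)"
    using assms(1,3) False by (simp add: algebra_simps)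
  then have "(C + 2*k - 2) div (2*k) < M"
    by (rule less_mult_imp_div_less)
  then show ?thesis
    using False by (simp add: min_summands_def)
qed

lemma min_summands_le_Suc:
  assumes "0 < k" and "c \<le> C"
  shows "min_summands k c \<le> Suc (min_summands k C)"
proof -
  have "min_summands k c \<le> Suc ((c + 2*k - 1) div (2*k))"
    by (auto simp: min_summands_def intro: div_le_mono)
  also have "\<dots> \<le> Suc ((C + 2*k - 1) div (2*k))"
    using assms(2) by (simp add: div_le_mono)
  also have "\<dots> \<le> Suc (min_summands k C)"
  proof (cases "even C")
    case False
    have "(C + 2*k - 1) div (2*k) \<le> (C + 2*k - 2 + 2*k) div (2*k)"
      by (rule div_le_mono) (use assms(1) in simp)
    also have "\<dots> = Suc ((C + 2*k - 2) div (2*k))"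
      using div_add_self2[of "2*k" "C + 2*k - 2"] assms(1) by simp
    finally show ?thesis
      using False by (simp add: min_summands_def)
  qed (simp add: min_summands_def)
  finally show ?thesis .
qed

lemma representable_gens_min_summands:
  assumes "0 < k"
  shows "representable (gens a h d k) (min_summands k c * (h*a) + c*d)"
proof (induction c rule: less_induct)
  case (less c)
  consider "c = 0" | "odd c" | "even c" "0 < c" "c \<le> 2*k" | "even c" "2*k < c"
    by fastforce
  then show ?case
  proof cases
    case 1
    then show ?thesis
      by (simp add: min_summands_0 representable_0)
  next
    case 2
    then obtain m where "c = Suc m"
      using odd_pos gr0_implies_Suc by blast
    then have "representable (gens a h d k)
        (min_summands k m * (h*a) + m*d + gens a h d k ! 0)"
      using less[of m] by (intro representable_add_nth) (auto simp: length_gens)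
    then show ?thesis
      using 2 \<open>c = Suc m\<close> assms by (simp add: min_summands_odd nth_gens_0 algebra_simps)
  next
    case 3
    then obtain m where "c = 2*m"
      by blast
    with 3 have c: "c = 2 * Suc (m - 1)" "m - 1 < k"
      by auto
    have "representable (gens a h d k) (0 + gens a h d k ! Suc (m - 1))"
      using c by (intro representable_add_nth representable_0) (simp add: length_gens)
    then show ?thesis
      using 3 c by (simp add: min_summands_even_le nth_gens_Suc algebra_simps)
  next
    case 4
    then obtain m where "c = m + 2*k" "0 < m"
      by (metis add.commute less_imp_add_positive)
    have "representable (gens a h d k)
        (min_summands k m * (h*a) + m*d + gens a h d k ! k)"
      using less[of m] \<open>c = m + 2*k\<close> assms by (intro representable_add_nth) (auto simp: length_gens)
    then show ?thesis
      using \<open>c = m + 2*k\<close> nth_gens_last[OF assms] min_summands_add_double[OF assms]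
      by (simp add: algebra_simps)
  qed
qed

lemma representable_gensE:
  assumes "representable (gens a h d k) n" and "0 < k"
  obtains M C where "n = M*(h*a) + C*d" and "min_summands k C \<le> M"
proof -
  obtain xs where "n = (\<Sum>i<Suc k. gens a h d k ! i * xs ! i)"
    using assms(1) unfolding representable_def length_gens by blast
  define S where "S = (\<Sum>i<k. xs ! Suc i)"
  define E where "E = (\<Sum>i<k. 2 * Suc i * xs ! Suc i)"
  have "(\<Sum>i<k. gens a h d k ! Suc i * xs ! Suc i)
      = (\<Sum>i<k. xs ! Suc i * (h*a) + 2 * Suc i * xs ! Suc i * d)"
    by (rule sum.cong) (simp_all add: nth_gens_Suc algebra_simps)
  also have "\<dots> = S*(h*a) + E*d"
    unfolding S_def E_def by (simp only: sum.distrib sum_distrib_right)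
  finally have n: "n = (xs ! 0 + S) * (h*a) + (xs ! 0 + E) * d"
    using \<open>n = _\<close> by (simp add: sum.lessThan_Suc_shift nth_gens_0 algebra_simps
        del: sum.lessThan_Suc)
  have "E \<le> (\<Sum>i<k. 2*k * xs ! Suc i)"
    unfolding E_def by (intro sum_mono mult_le_mono1) simp
  then have E_le: "E \<le> 2*k*S"
    by (simp add: S_def sum_distrib_left)
  have "even E"
    unfolding E_def by (intro dvd_sum) simp
  have "min_summands k (xs ! 0 + E) \<le> xs ! 0 + S"
  proof (rule min_summands_le[OF assms(2)])
    have "xs ! 0 \<le> 2*k * xs ! 0"
      using assms(2) by simp
    then have "xs ! 0 + E \<le> 2*k * xs ! 0 + 2*k*S"
      using E_le by (rule add_le_mono)
    then show "xs ! 0 + E \<le> 2*k*(xs ! 0 + S)"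
      by (simp only: distrib_left)
    assume "odd (xs ! 0 + E)"
    with \<open>even E\<close> obtain y where "xs ! 0 = Suc y"
      by (metis odd_add odd_pos gr0_implies_Suc)
    have "y \<le> 2*k*y"
      using assms(2) by simp
    then have "y + E \<le> 2*k*y + 2*k*S"
      using E_le by (rule add_le_mono)
    with \<open>xs ! 0 = Suc y\<close> show "xs ! 0 + E + 2*k \<le> 2*k*(xs ! 0 + S) + 1"
      by (simp add: algebra_simps)
  qed
  with n show ?thesis
    using that by blast
qed

lemma N_gens_mult_mod:
  assumes "coprime a d" and "0 < k" and "h < d" and "c < a"
  shows "N a (gens a h d k) (c*d mod a) = min_summands k c * (h*a) + c*d"
  unfolding N_def
proof (rule Least_equality)
  show "(min_summands k c * (h*a) + c*d) mod a = c*d mod a \<and>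
      representable (gens a h d k) (min_summands k c * (h*a) + c*d)"
    using representable_gens_min_summands[OF assms(2)]
    by (simp only: mult.assoc[symmetric] mod_mult_self3 simp_thms)
next
  fix n
  assume n: "n mod a = c*d mod a \<and> representable (gens a h d k) n"
  then obtain M C where MC: "n = M*(h*a) + C*d" "min_summands k C \<le> M"
    using representable_gensE[OF _ assms(2)] by blast
  then have "[C*d = c*d] (mod a)"
    using n by (simp add: cong_def mult.assoc[symmetric])
  then have "[C = c] (mod a)"
    using assms(1) by (simp add: cong_mult_rcancel_nat coprime_commute)
  then have "C mod a = c"
    using assms(4) by (simp add: cong_def)
  then obtain j where C: "C = c + a*j"
    by (metis div_mult_mod_eq add.commute mult.commute)
  show "min_summands k c * (h*a) + c*d \<le> n"
  proof (cases "j = 0")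
    case True
    then show ?thesis
      using MC C by simp
  next
    case False
    have "min_summands k c \<le> Suc M"
      using min_summands_le_Suc[OF assms(2), of c C] C MC(2) by simp
    then have "min_summands k c * (h*a) + c*d \<le> Suc M * (h*a) + c*d"
      by (simp only: add_le_mono1 mult_le_mono1)
    also have "\<dots> = M*(h*a) + h*a + c*d"
      by simp
    also have "\<dots> \<le> M*(h*a) + d*j*a + c*d"
    proof -
      have "d \<le> d*j"
        using False by simp
      then have "h \<le> d*j"
        using assms(3) by linarith
      then show ?thesis
        by (intro add_le_mono order.refl mult_le_mono1)
    qed
    also have "\<dots> = n"
      using MC(1) C by (simp add: algebra_simps)
    finally show ?thesis .
  qed
qed

lemma bij_betw_mult_mod:
  assumes "coprime a (d::nat)"
  shows "bij_betw (\<lambda>c. c*d mod a) {..<a} {..<a}"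
proof -
  have "inj_on (\<lambda>c. c*d mod a) {..<a}"
  proof (rule inj_onI)
    fix u v
    assume "u \<in> {..<a}" "v \<in> {..<a}" "u*d mod a = v*d mod a"
    with assms show "u = v"
      by (simp add: cong_def[symmetric] cong_mult_rcancel_nat coprime_commute) (simp add: cong_def)
  qed
  moreover have "(\<lambda>c. c*d mod a) ` {..<a} \<subseteq> {..<a}"
    by (auto intro: mod_less_divisor)
  ultimately show ?thesis
    by (simp add: bij_betw_def endo_inj_surj)
qed

lemma sum_N_gens:
  assumes "coprime a d" and "0 < k" and "h < d"
  shows "(\<Sum>r<a. f (N a (gens a h d k) r)) = (\<Sum>c<a. f (min_summands k c * (h*a) + c*d))"
  by (rule sum.reindex_bij_betw[OF bij_betw_mult_mod[OF assms(1)], symmetric, THEN trans])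
    (simp add: N_gens_mult_mod[OF assms])

lemma sum_lessThan_add: "(\<Sum>c<m + n. f c) = (\<Sum>c<m. f c) + (\<Sum>c<n. f (m + c))"
  for m n :: nat
  by (induction n) (simp_all add: add.assoc)

lemma sum_power_periodic:
  fixes x :: "'a::comm_semiring_1"
  assumes periodic: "\<And>c. e (c + p) = e c + P"
  shows "(\<Sum>c<p*s + t. x ^ e c)
    = (\<Sum>i<s. (x^P)^i) * (\<Sum>c<p. x ^ e c) + (x^P)^s * (\<Sum>c<t. x ^ e c)"
proof -
  have shift: "e (p*i + c) = P*i + e c" for i c
  proof (induction i)
    case (Suc i)
    have "e (p * Suc i + c) = e ((p*i + c) + p)"
      by (simp add: algebra_simps)
    then show ?case
      using Suc by (simp add: periodic)
  qed simp
  have shifted_sum: "(\<Sum>c<n. x ^ e (p*i + c)) = (x^P)^i * (\<Sum>c<n. x ^ e c)" for i n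
    by (simp add: shift power_add power_mult sum_distrib_left)
  have "(\<Sum>c<p*s. x ^ e c) = (\<Sum>i<s. (x^P)^i) * (\<Sum>c<p. x ^ e c)"
  proof (induction s)
    case (Suc s)
    have "(\<Sum>c<p * Suc s. x ^ e c) = (\<Sum>c<p*s + p. x ^ e c)"
      by (simp add: add.commute)
    also have "\<dots> = (\<Sum>c<p*s. x ^ e c) + (x^P)^s * (\<Sum>c<p. x ^ e c)"
      by (simp only: sum_lessThan_add shifted_sum)
    finally show ?case
      using Suc by (simp add: algebra_simps)
  qed simp
  then show ?thesis
    by (simp add: sum_lessThan_add shifted_sum)
qed

lemma sum_power_min_summands_initial:
  fixes x :: "'a::comm_semiring_1"
  assumes "0 < n" and "n \<le> 2*k"
  shows "(\<Sum>c<n. x ^ (min_summands k (Suc c) * (h*a) + Suc c * d))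
    = x^(h*a + d) + x^(h*a + 2*d) * (\<Sum>j<n div 2. (x^(2*d))^j)
        + x^(2*h*a + 3*d) * (\<Sum>j<(n - 1) div 2. (x^(2*d))^j)"
  using assms
proof (induction n rule: nat_induct_non_zero)
  case 1
  have "min_summands k 1 = 1"
    using assms by (simp add: min_summands_def)
  then show ?case
    by simp
next
  case (Suc n)
  have IH: "(\<Sum>c<n. x ^ (min_summands k (Suc c) * (h*a) + Suc c * d))
    = x^(h*a + d) + x^(h*a + 2*d) * (\<Sum>j<n div 2. (x^(2*d))^j)
        + x^(2*h*a + 3*d) * (\<Sum>j<(n - 1) div 2. (x^(2*d))^j)"
    using Suc by simp
  show ?case
  proof (cases "even n")
    case True
    define j where "j = n div 2 - 1"
    have n: "n = 2*j + 2"
      using True \<open>0 < n\<close> unfolding j_def by presburger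
    have "min_summands k (Suc n) = 2"
      using Suc.prems n by (intro min_summands_odd_le) auto
    then have "x ^ (min_summands k (Suc n) * (h*a) + Suc n * d) = x^(2*h*a + 3*d) * (x^(2*d))^j"
      using n by (simp add: power_mult[symmetric] power_add[symmetric] algebra_simps)
    moreover have "Suc n div 2 = n div 2" "(Suc n - 1) div 2 = Suc ((n - 1) div 2)" "(n - 1) div 2 = j"
      using n by simp_all
    ultimately show ?thesis
      by (simp only: sum.lessThan_Suc IH) (simp add: algebra_simps)
  next
    case False
    define j where "j = n div 2"
    have n: "n = 2*j + 1"
      using False unfolding j_def by presburger
    have "min_summands k (Suc n) = 1"
      using Suc.prems n by (intro min_summands_even_le) auto
    then have "x ^ (min_summands k (Suc n) * (h*a) + Suc n * d) = x^(h*a + 2*d) * (x^(2*d))^j"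
      using n by (simp add: power_mult[symmetric] power_add[symmetric] algebra_simps)
    moreover have "Suc n div 2 = Suc (n div 2)" "(Suc n - 1) div 2 = (n - 1) div 2" "n div 2 = j"
      using n by simp_all
    ultimately show ?thesis
      by (simp only: sum.lessThan_Suc IH) (simp add: algebra_simps)
  qed
qed

lemma sum_power_min_summands:
  fixes x :: "'a::comm_semiring_1" and a h d k :: nat
  defines "q \<equiv> x^(h*a + 2*k*d)" and "y \<equiv> x^(2*d)"
  assumes "0 < k" and "1 \<le> t" and "t \<le> 2*k"
  shows "(\<Sum>c<Suc (2*k*s + t). x ^ (min_summands k c * (h*a) + c*d))
    = 1 + x^(h*a + d) * (\<Sum>i<Suc s. q^i)
        + x^(h*a + 2*d) * (\<Sum>i<s. q^i) * (\<Sum>j<k. y^j)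
        + x^(2*h*a + 3*d) * (\<Sum>i<s. q^i) * (\<Sum>j<k - 1. y^j)
        + x^(h*a + 2*d) * q^s * (\<Sum>j<t div 2. y^j)
        + x^(2*h*a + 3*d) * q^s * (\<Sum>j<(t - 1) div 2. y^j)"
proof -
  let ?e = "\<lambda>c. min_summands k (Suc c) * (h*a) + Suc c * d"
  have periodic: "?e (c + 2*k) = ?e c + (h*a + 2*k*d)" for c
    using min_summands_add_double[OF assms(3), of "Suc c"] by (simp add: algebra_simps)
  have "(\<Sum>c<Suc (2*k*s + t). x ^ (min_summands k c * (h*a) + c*d))
      = 1 + (\<Sum>c<2*k*s + t. x ^ ?e c)"
    by (simp add: sum.lessThan_Suc_shift min_summands_0 del: sum.lessThan_Suc)
  also have "\<dots> = 1 + (\<Sum>i<s. q^i) * (\<Sum>c<2*k. x ^ ?e c) + q^s * (\<Sum>c<t. x ^ ?e c)"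
    unfolding q_def by (simp only: sum_power_periodic[of ?e, OF periodic] add.assoc)
  also have "(\<Sum>c<2*k. x ^ ?e c) = x^(h*a + d) + x^(h*a + 2*d) * (\<Sum>j<k. y^j)
      + x^(2*h*a + 3*d) * (\<Sum>j<k - 1. y^j)"
  proof -
    have "(2*k - 1) div 2 = k - 1"
      using assms(3) by presburger
    then show ?thesis
      unfolding y_def using sum_power_min_summands_initial[of "2*k" k] assms(3) by simp
  qed
  also have "(\<Sum>c<t. x ^ ?e c) = x^(h*a + d) + x^(h*a + 2*d) * (\<Sum>j<t div 2. y^j)
      + x^(2*h*a + 3*d) * (\<Sum>j<(t - 1) div 2. y^j)"
    unfolding y_def using sum_power_min_summands_initial[of t k] assms(4,5) by simp
  finally show ?thesis
    by (simp add: algebra_simps)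
qed

lemma if_odd_tail_eq:
  fixes x :: "'a::field"
  assumes "1 \<le> t"
  shows "(if odd t then A * (1 - x^(d*(t-1))) / Y + B * (1 - x^(d*(t-1))) / Y
      else A * (1 - x^(d*t)) / Y + B * (1 - x^(d*(t-2))) / Y)
    = A * (1 - (x^(2*d))^(t div 2)) / Y + B * (1 - (x^(2*d))^((t - 1) div 2)) / Y"
proof (cases "odd t")
  case True
  then have "d*(t-1) = 2*d*((t - 1) div 2)" "t div 2 = (t - 1) div 2"
    by (auto elim!: oddE)
  then have "x^(d*(t-1)) = (x^(2*d))^((t - 1) div 2)" "t div 2 = (t - 1) div 2"
    by (simp_all only: power_mult[of x "2*d"])
  with True show ?thesis
    by simp
next
  case False
  then have "d*t = 2*d*(t div 2)" "d*(t-2) = 2*d*((t - 1) div 2)"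
    using assms by (auto elim!: evenE)
  then have "x^(d*t) = (x^(2*d))^(t div 2)" "x^(d*(t-2)) = (x^(2*d))^((t - 1) div 2)"
    by (simp_all only: power_mult[of x "2*d"])
  with False show ?thesis
    by simp
qed

theorem mainTheorem14:
  fixes a h d k s t :: nat and x :: real
  assumes "coprime a d"
    and "a > 0" and "h > 0" and "d > 0" and "k > 0"
    and "a > 2" and "d > h" and "1 \<le> 2*k" and "2*k \<le> a - 1"
    and "a - 1 = 2*k*s + t" and "1 \<le> t" and "t \<le> 2*k"
    and "\<bar>x\<bar> < 1"
  shows "(\<Sum>r = 0..a-1. x ^ N a (gens a h d k) r) =
      1 + x^(h*a+d) * (1 - x^((h*a+2*k*d)*(s+1))) / (1 - x^(h*a+2*k*d))
        + x^(h*a+2*d) * (1 - x^((h*a+2*k*d)*s)) * (1 - x^(2*d*k))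
            / ((1 - x^(h*a+2*k*d)) * (1 - x^(2*d)))
        + x^(2*h*a+3*d) * (1 - x^((h*a+2*k*d)*s)) * (1 - x^(2*d*(k-1)))
            / ((1 - x^(h*a+2*k*d)) * (1 - x^(2*d)))
        + (if odd t then
             x^(h*a*(s+1)+d*(2*k*s+2)) * (1 - x^(d*(t-1))) / (1 - x^(2*d))
           + x^(h*a*(s+2)+d*(2*k*s+3)) * (1 - x^(d*(t-1))) / (1 - x^(2*d))
           else
             x^(h*a*(s+1)+d*(2*k*s+2)) * (1 - x^(d*t)) / (1 - x^(2*d))
           + x^(h*a*(s+2)+d*(2*k*s+3)) * (1 - x^(d*(t-2))) / (1 - x^(2*d)))"
proof -
  let ?P = "h*a + 2*k*d"
  have "{0..a-1} = {..<a}" "{..<a} = {..<Suc (2*k*s + t)}"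
    using assms(2,10) by auto
  then have sum_form: "(\<Sum>r = 0..a-1. x ^ N a (gens a h d k) r)
      = (\<Sum>c<Suc (2*k*s + t). x ^ (min_summands k c * (h*a) + c*d))"
    using sum_N_gens[OF assms(1,5,7)] by metis
  have "x^?P \<noteq> 1" and "x^(2*d) \<noteq> 1"
    using assms power_eq_1_iff[of x ?P] power_eq_1_iff[of x "2*d"] by auto
  moreover have tail_exponents: "x^(h*a*(s+1)+d*(2*k*s+2)) = x^(h*a+2*d) * (x^?P)^s"
      "x^(h*a*(s+2)+d*(2*k*s+3)) = x^(2*h*a+3*d) * (x^?P)^s"
    by (simp_all add: power_mult[symmetric] power_add[symmetric] algebra_simps)
  ultimately show ?thesis
    unfolding sum_form sum_power_min_summands[OF assms(5,11,12)] tail_exponents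
      if_odd_tail_eq[OF assms(11)]
    by (simp add: sum_gp_strict power_add power_mult del: sum.lessThan_Suc)
qed

end
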